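(* Let $\mathbb{K}$ be a field of characteristic zero and let $n\in\mathbb{N}$ with $n\geq 4$. Let $V$ be an $n$-dimensional $\mathbb{K}$-vector space. Then the family of functions $\{\phi_{n,t}\}_{t\in\mathbb{K}}$ on $C^2(V;V)$ is infinite, i.e. the set $\{\phi_{n,t}: t\in\mathbb{K}\}$ is an infinite set of functions.
   Context: An anti-commutative algebra is a vector space $V$ with a bilinear map $\mu:V\times V\to V$ satisfying $\mu(X,Y)=-\mu(Y,X)$. For $\alpha,\beta,\gamma\in\mathbb{K}$, an $(\alpha,\beta,\gamma)$-derivation of $(V,\mu)$ is a linear map $D:V\to V$ with $\alpha D\mu(X,Y)=\beta\mu(DX,Y)+\gamma\mu(X,DY)$ for all $X,Y\in V$; their space is $\mathcal{D}(\alpha,\beta,\gamma)(V,\mu)$. $C^2(V;V)$ is the space of antisymmetric bilinear maps $V\times V\to V$, and for $t\in\mathbb{K}$, $\phi_{n,t}:C^2(V;V)\to\{0,1,\dots,n^2\}$ is defined by $\phi_{n,t}(\mu)=\dim\mathcal{D}(t,1,0)(V,\mu)$. *)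

theory Defs
  imports "HOL-Analysis.Analysis" "HOL-Library.Function_Algebras"
begin

definition C2 :: "('k::field \<Rightarrow> 'v::ab_group_add \<Rightarrow> 'v) \<Rightarrow> ('v \<Rightarrow> 'v \<Rightarrow> 'v) set" where
  "C2 sc = {mu. (\<forall>x. Vector_Spaces.linear sc sc (mu x))
              \<and> (\<forall>y. Vector_Spaces.linear sc sc (\<lambda>x. mu x y))
              \<and> (\<forall>x y. mu x y = - mu y x)}"

definition gen_derivations ::
  "('k::field \<Rightarrow> 'v::ab_group_add \<Rightarrow> 'v) \<Rightarrow> 'k \<Rightarrow> 'k \<Rightarrow> 'k \<Rightarrow> ('v \<Rightarrow> 'v \<Rightarrow> 'v) \<Rightarrow> ('v \<Rightarrow> 'v) set" where
  "gen_derivations sc \<alpha> \<beta> \<gamma> mu = {D. Vector_Spaces.linear sc sc D \<and>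
     (\<forall>X Y. sc \<alpha> (D (mu X Y)) = sc \<beta> (mu (D X) Y) + sc \<gamma> (mu X (D Y)))}"

definition fun_scale :: "('k \<Rightarrow> 'v \<Rightarrow> 'v) \<Rightarrow> 'k \<Rightarrow> ('v \<Rightarrow> 'v) \<Rightarrow> ('v \<Rightarrow> 'v)" where
  "fun_scale sc c f = (\<lambda>x. sc c (f x))"

definition phi :: "('k::field \<Rightarrow> 'v::ab_group_add \<Rightarrow> 'v) \<Rightarrow> 'k \<Rightarrow> ('v \<Rightarrow> 'v \<Rightarrow> 'v) \<Rightarrow> nat" where
  "phi sc t mu = vector_space.dim (fun_scale sc) (gen_derivations sc t 1 0 mu)"

end

(*
  For t \<noteq> 0 we build an anticommutative product mu t on V out of four basis vectors
  e1, e2, e3, e4 such that, for s outside {0, 1, -1, -t}, the (s,1,0)-derivations of mu t are the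
  multiples of the nilpotent map D0 (e1 -> e2, e3 -> e4) if s = t, and only 0 otherwise.
  Hence phi s (mu t) is 1 for s = t and 0 for s \<noteq> t, so the functions phi 2, phi 3, ...
  are pairwise distinct.
*)
theory Submission
  imports Defs
begin

lemma vector_space_fun_scale:
  fixes sc :: "'a::field \<Rightarrow> 'b::ab_group_add \<Rightarrow> 'b"
  assumes "vector_space sc"
  shows "vector_space (fun_scale sc)"
  using assms unfolding vector_space_def module_def fun_scale_def
  by (auto simp: fun_eq_iff)

context vector_space
begin

lemma dim_eq_0_if_subset_zero:
  assumes "S \<subseteq> {0}"
  shows "dim S = 0"
  using dim_le_card[of S "{}"] assms by (simp add: span_empty)

lemma dim_eq_1_if_subset_span_singleton:
  assumes "x \<in> S" "x \<noteq> 0" "S \<subseteq> span {x}"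
  shows "dim S = 1"
proof -
  have "span {x} = span S"
    using assms by (simp add: span_eq span_base)
  with assms(2) show ?thesis
    using dim_eq_card[of "{x}" S] by simp
qed

end

locale four_basis_vectors = finite_dimensional_vector_space scale Basis
  for scale :: "'a::field \<Rightarrow> 'b::ab_group_add \<Rightarrow> 'b" (infixr \<open>*s\<close> 75) and Basis +
  fixes e1 e2 e3 e4 :: 'b
  assumes in_Basis: "e1 \<in> Basis" "e2 \<in> Basis" "e3 \<in> Basis" "e4 \<in> Basis"
    and distinct: "distinct [e1, e2, e3, e4]"
begin

definition coord :: "'b \<Rightarrow> 'b \<Rightarrow> 'a" where
  "coord x b = representation Basis x b"

lemma coord_add [simp]: "coord (x + y) b = coord x b + coord y b"
  unfolding coord_def using representation_add[OF independent_Basis] span_Basis by auto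

lemma coord_scale [simp]: "coord (c *s x) b = c * coord x b"
  unfolding coord_def using representation_scale[OF independent_Basis] span_Basis by auto

lemma coord_diff [simp]: "coord (x - y) b = coord x b - coord y b"
  unfolding coord_def using representation_diff[OF independent_Basis] span_Basis by auto

lemma coord_neg [simp]: "coord (- x) b = - coord x b"
  unfolding coord_def using representation_neg[OF independent_Basis] span_Basis by auto

lemma coord_zero [simp]: "coord 0 b = 0"
  unfolding coord_def using representation_zero by metis

lemma coord_basis: "b \<in> Basis \<Longrightarrow> coord b b' = (if b' = b then 1 else 0)"
  unfolding coord_def using representation_basis[OF independent_Basis] by metis

lemma coord_e [simp]:
  "coord e1 e1 = 1" "coord e1 e2 = 0" "coord e1 e3 = 0" "coord e1 e4 = 0"
  "coord e2 e1 = 0" "coord e2 e2 = 1" "coord e2 e3 = 0" "coord e2 e4 = 0"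
  "coord e3 e1 = 0" "coord e3 e2 = 0" "coord e3 e3 = 1" "coord e3 e4 = 0"
  "coord e4 e1 = 0" "coord e4 e2 = 0" "coord e4 e3 = 0" "coord e4 e4 = 1"
  using distinct by (auto simp: coord_basis in_Basis)

definition rest :: "'b \<Rightarrow> 'b" where
  "rest x = x - (coord x e1 *s e1 + coord x e2 *s e2 + coord x e3 *s e3 + coord x e4 *s e4)"

lemma decompose:
  "x = coord x e1 *s e1 + coord x e2 *s e2 + coord x e3 *s e3 + coord x e4 *s e4 + rest x"
  unfolding rest_def by simp

lemma coord_rest [simp]:
  "coord (rest x) e1 = 0" "coord (rest x) e2 = 0" "coord (rest x) e3 = 0" "coord (rest x) e4 = 0"
  unfolding rest_def by simp_all

lemma rest_add [simp]: "rest (x + y) = rest x + rest y"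
  unfolding rest_def by (simp add: algebra_simps)

lemma rest_scale [simp]: "rest (c *s x) = c *s rest x"
  unfolding rest_def by (simp add: algebra_simps)

lemma rest_diff [simp]: "rest (x - y) = rest x - rest y"
  unfolding rest_def by (simp add: algebra_simps)

lemma rest_neg [simp]: "rest (- x) = - rest x"
  unfolding rest_def by (simp add: algebra_simps)

lemma rest_zero [simp]: "rest 0 = 0"
  unfolding rest_def by simp

lemma rest_e [simp]: "rest e1 = 0" "rest e2 = 0" "rest e3 = 0" "rest e4 = 0"
  unfolding rest_def by simp_all

lemma rest_rest [simp]: "rest (rest x) = rest x"
  by (subst (2) rest_def) simp

lemma coord_other_basis:
  assumes "b \<in> Basis" "b \<notin> {e1, e2, e3, e4}"
  shows "coord b e1 = 0" "coord b e2 = 0" "coord b e3 = 0" "coord b e4 = 0"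
  using assms distinct by (auto simp: coord_basis)

lemma rest_other_basis: "b \<in> Basis \<Longrightarrow> b \<notin> {e1, e2, e3, e4} \<Longrightarrow> rest b = b"
  unfolding rest_def by (simp add: coord_other_basis)

lemma coord_rest_eqI:
  assumes "coord u e1 = coord w e1" "coord u e2 = coord w e2"
    and "coord u e3 = coord w e3" "coord u e4 = coord w e4" and "rest u = rest w"
  shows "u = w"
  by (subst decompose, subst (2) decompose) (simp add: assms)

(* The factor t on the (e2 + e4)-component is what makes D0 a (t,1,0)-derivation; the rest-terms
   make e1 act as the identity on the span of the other basis vectors, which forces every
   (s,1,0)-derivation with s \<notin> {1, -1, -t} to vanish there. *)
definition mu :: "'a \<Rightarrow> 'b \<Rightarrow> 'b \<Rightarrow> 'b" where
  "mu t x y = (coord x e1 * coord y e3 - coord x e3 * coord y e1) *s (e1 + e3)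
     + (t * (coord x e2 * coord y e3 - coord x e3 * coord y e2
             + coord x e1 * coord y e4 - coord x e4 * coord y e1)) *s (e2 + e4)
     + coord y e1 *s rest x - coord x e1 *s rest y"

lemma coord_mu [simp]:
  "coord (mu t x y) e1 = coord x e1 * coord y e3 - coord x e3 * coord y e1"
  "coord (mu t x y) e3 = coord x e1 * coord y e3 - coord x e3 * coord y e1"
  "coord (mu t x y) e2 = t * (coord x e2 * coord y e3 - coord x e3 * coord y e2
                               + coord x e1 * coord y e4 - coord x e4 * coord y e1)"
  "coord (mu t x y) e4 = t * (coord x e2 * coord y e3 - coord x e3 * coord y e2
                               + coord x e1 * coord y e4 - coord x e4 * coord y e1)"
  "rest (mu t x y) = coord y e1 *s rest x - coord x e1 *s rest y"
  unfolding mu_def by simp_all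

lemma mu_in_C2: "mu t \<in> C2 scale"
proof -
  have "mu t (x + y) z = mu t x z + mu t y z" "mu t (c *s x) z = c *s mu t x z"
    "mu t z (x + y) = mu t z x + mu t z y" "mu t z (c *s x) = c *s mu t z x"
    "mu t x y = - mu t y x" for x y z c
    by (rule coord_rest_eqI; simp add: algebra_simps)+
  then show ?thesis
    unfolding C2_def Vector_Spaces.linear_iff using vector_space_axioms by blast
qed

definition D0 :: "'b \<Rightarrow> 'b" where
  "D0 x = coord x e1 *s e2 + coord x e3 *s e4"

lemma linear_D0: "Vector_Spaces.linear scale scale D0"
  unfolding Vector_Spaces.linear_iff D0_def by (auto simp: vector_space_axioms algebra_simps)

lemma D0_e [simp]: "D0 e1 = e2" "D0 e2 = 0" "D0 e3 = e4" "D0 e4 = 0"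
  unfolding D0_def by simp_all

lemma D0_nonzero: "D0 \<noteq> 0"
  using D0_e(1) coord_e(6) by (metis coord_zero zero_fun_def zero_neq_one)

lemma D0_derivation: "D0 \<in> gen_derivations scale t 1 0 (mu t)"
proof -
  have "t *s D0 (mu t x y) = mu t (D0 x) y" for x y
    by (rule coord_rest_eqI) (simp_all add: D0_def algebra_simps)
  then show ?thesis
    unfolding gen_derivations_def using linear_D0 by simp
qed

end

locale mu_derivation = four_basis_vectors +
  fixes s t :: 'a and D :: "'b \<Rightarrow> 'b"
  assumes derivation: "D \<in> gen_derivations scale s 1 0 (mu t)"
    and nondegenerate: "s \<noteq> 0" "s \<noteq> 1" "s + 1 \<noteq> 0" "s + t \<noteq> 0" "t \<noteq> 0"
begin

sublocale D: Vector_Spaces.linear scale scale D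
  using derivation unfolding gen_derivations_def by blast

lemma derivation_eq: "s *s D (mu t x y) = mu t (D x) y"
  using derivation unfolding gen_derivations_def by simp

lemma coord_derivation_eq: "s * coord (D (mu t x y)) b = coord (mu t (D x) y) b"
  using derivation_eq by (metis coord_scale)

lemma rest_derivation_eq: "s *s rest (D (mu t x y)) = rest (mu t (D x) y)"
  using derivation_eq by (metis rest_scale)

lemmas expand_mu = mu_def D.add D.scale D.diff D.zero

definition coeff :: 'a where
  "coeff = coord (D e1) e2"

lemma coord_D_e3_e1: "coord (D e3) e1 = 0"
  using coord_derivation_eq[of e3 e3 e1] by (simp add: expand_mu nondegenerate)

lemma coord_D_e3_e2: "coord (D e3) e2 = 0"
  using coord_derivation_eq[of e3 e3 e2] by (simp add: expand_mu nondegenerate)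

lemma coord_D_e4_e2: "coord (D e4) e2 = 0"
  using coord_derivation_eq[of e4 e3 e2] by (simp add: expand_mu nondegenerate)

lemma D_e1: "D e1 = coeff *s e2"
  unfolding coeff_def
proof (rule coord_rest_eqI)
  show "coord (D e1) e1 = coord (coord (D e1) e2 *s e2) e1"
    using coord_derivation_eq[of e1 e3 e1] coord_D_e3_e1 by (simp add: expand_mu nondegenerate)
  show "coord (D e1) e3 = coord (coord (D e1) e2 *s e2) e3"
    using coord_derivation_eq[of e1 e1 e3] by (simp add: expand_mu nondegenerate)
  show "coord (D e1) e4 = coord (coord (D e1) e2 *s e2) e4"
    using coord_derivation_eq[of e1 e1 e2] by (simp add: expand_mu nondegenerate)
  show "rest (D e1) = rest (coord (D e1) e2 *s e2)"
    using rest_derivation_eq[of e1 e1] by (simp add: expand_mu nondegenerate)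
qed simp

lemma eigenvalue_coeff: "s * coeff = t * coeff"
  using coord_derivation_eq[of e1 e3 e2] coord_D_e3_e2 D_e1 by (simp add: expand_mu nondegenerate)

lemma D_e3: "D e3 = coeff *s e4"
proof (rule coord_rest_eqI)
  have "s * coord (D e3) e4 = t * coeff"
    using coord_derivation_eq[of e1 e3 e4] D_e1 by (simp add: expand_mu nondegenerate)
  then have "s * coord (D e3) e4 = s * coeff"
    by (metis eigenvalue_coeff)
  then show "coord (D e3) e4 = coord (coeff *s e4) e4"
    using nondegenerate by simp
  show "coord (D e3) e3 = coord (coeff *s e4) e3"
    using coord_derivation_eq[of e1 e3 e3] D_e1 by (simp add: expand_mu nondegenerate)
  show "rest (D e3) = rest (coeff *s e4)"
    using rest_derivation_eq[of e1 e3] D_e1 by (simp add: expand_mu nondegenerate)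
qed (simp_all add: coord_D_e3_e1 coord_D_e3_e2)

lemma D_e2: "D e2 = 0"
proof -
  have "coord (D e2) e4 = 0"
    using coord_derivation_eq[of e2 e1 e2] by (simp add: expand_mu nondegenerate)
  then have "coord (D e2) e2 = 0"
    using coord_derivation_eq[of e2 e3 e2] coord_D_e4_e2 by (simp add: expand_mu nondegenerate)
  show ?thesis
  proof (rule coord_rest_eqI)
    show "coord (D e2) e1 = coord 0 e1"
      using coord_derivation_eq[of e2 e4 e2] by (simp add: expand_mu nondegenerate)
    show "coord (D e2) e3 = coord 0 e3"
      using coord_derivation_eq[of e2 e2 e2] by (simp add: expand_mu nondegenerate)
    show "rest (D e2) = rest 0"
      using rest_derivation_eq[of e2 e1] by (simp add: expand_mu nondegenerate)
  qed (simp_all add: \<open>coord (D e2) e4 = 0\<close> \<open>coord (D e2) e2 = 0\<close>)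
qed

lemma D_e4: "D e4 = 0"
proof (rule coord_rest_eqI)
  show "coord (D e4) e1 = coord 0 e1"
    using coord_derivation_eq[of e4 e4 e2] by (simp add: expand_mu nondegenerate)
  show "coord (D e4) e3 = coord 0 e3"
    using coord_derivation_eq[of e4 e2 e2] by (simp add: expand_mu nondegenerate)
  show "coord (D e4) e4 = coord 0 e4"
    using coord_derivation_eq[of e2 e3 e4] D_e2 by (simp add: expand_mu nondegenerate)
  show "rest (D e4) = rest 0"
    using rest_derivation_eq[of e2 e3] D_e2 by (simp add: expand_mu nondegenerate)
qed (simp add: coord_D_e4_e2)

lemma D_other_basis:
  assumes "b \<in> Basis" "b \<notin> {e1, e2, e3, e4}"
  shows "D b = 0"
proof -
  have mu_b_e1: "mu t b e1 = b"
    using coord_other_basis[OF assms] rest_other_basis[OF assms] by (simp add: mu_def)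
  have "s * coord (D b) e3 = - coord (D b) e3"
    using coord_derivation_eq[of b e1 e3] unfolding mu_b_e1 by simp
  then have "(s + 1) * coord (D b) e3 = 0"
    by (simp add: distrib_right)
  then have 3: "coord (D b) e3 = 0"
    using nondegenerate by simp
  have "s * coord (D b) e4 = - t * coord (D b) e4"
    using coord_derivation_eq[of b e1 e4] unfolding mu_b_e1 by simp
  then have "(s + t) * coord (D b) e4 = 0"
    by (simp add: distrib_right)
  then have 4: "coord (D b) e4 = 0"
    using nondegenerate by simp
  have "s *s rest (D b) = rest (D b)"
    using rest_derivation_eq[of b e1] unfolding mu_b_e1 by simp
  then have "(s - 1) *s rest (D b) = 0"
    by (simp add: scale_left_diff_distrib)
  then have "rest (D b) = 0"
    using nondegenerate by simp
  moreover have "coord (D b) e1 = 0"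
    using coord_derivation_eq[of b e1 e1] 3 nondegenerate unfolding mu_b_e1 by simp
  moreover have "coord (D b) e2 = 0"
    using coord_derivation_eq[of b e1 e2] 4 nondegenerate unfolding mu_b_e1 by simp
  ultimately show ?thesis
    using 3 4 coord_rest_eqI[of "D b" 0] by simp
qed

lemma D_eq_multiple_D0: "D = fun_scale scale coeff D0"
proof -
  interpret pair: vector_space_pair scale scale ..
  have "Vector_Spaces.linear scale scale (fun_scale scale coeff D0)"
    using linear_D0 by (simp add: fun_scale_def Vector_Spaces.linear_iff algebra_simps)
  moreover have "D b = fun_scale scale coeff D0 b" if "b \<in> Basis" for b
    using that D_e1 D_e2 D_e3 D_e4 D_other_basis[OF that]
    by (cases "b \<in> {e1, e2, e3, e4}") (auto simp: fun_scale_def D0_def coord_other_basis)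
  ultimately show ?thesis
    using pair.linear_eq_on[OF D.linear_axioms] span_Basis by blast
qed

lemma D_eq_0_if_ne: "s \<noteq> t \<Longrightarrow> D = 0"
  using D_eq_multiple_D0 eigenvalue_coeff by (simp add: fun_scale_def zero_fun_def)

end

context four_basis_vectors
begin

lemma phi_mu_eq:
  assumes nondegenerate: "s \<noteq> 0" "s \<noteq> 1" "s + 1 \<noteq> 0" "s + t \<noteq> 0" "t \<noteq> 0"
  shows "phi scale s (mu t) = (if s = t then 1 else 0)"
proof -
  interpret End: vector_space "fun_scale scale"
    by (rule vector_space_fun_scale[OF vector_space_axioms])
  let ?G = "gen_derivations scale s 1 0 (mu t)"
  have derivation: "mu_derivation scale Basis e1 e2 e3 e4 s t D" if "D \<in> ?G" for D
    using that nondegenerate four_basis_vectors_axioms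
    unfolding mu_derivation_def mu_derivation_axioms_def by blast
  show ?thesis
  proof (cases "s = t")
    case True
    have "?G \<subseteq> End.span {D0}"
      using mu_derivation.D_eq_multiple_D0[OF derivation] by (auto simp: End.span_singleton)
    then have "End.dim ?G = 1"
      using End.dim_eq_1_if_subset_span_singleton D0_derivation D0_nonzero True by blast
    with True show ?thesis
      unfolding phi_def by simp
  next
    case False
    have "?G \<subseteq> {0}"
      using mu_derivation.D_eq_0_if_ne[OF derivation] False by blast
    with False show ?thesis
      unfolding phi_def by (simp add: End.dim_eq_0_if_subset_zero)
  qed
qed

lemma inj_on_phi:
  assumes "\<And>s t. s \<in> T \<Longrightarrow> t \<in> T \<Longrightarrow> s \<noteq> 0 \<and> s \<noteq> 1 \<and> s + 1 \<noteq> 0 \<and> s + t \<noteq> 0"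
  shows "inj_on (\<lambda>t. restrict (phi scale t) (C2 scale)) T"
proof (rule inj_onI)
  fix s t
  assume "s \<in> T" "t \<in> T" and "restrict (phi scale s) (C2 scale) = restrict (phi scale t) (C2 scale)"
  then have "phi scale s (mu t) = phi scale t (mu t)"
    using mu_in_C2 by (metis restrict_apply')
  then show "s = t"
    using phi_mu_eq assms[OF \<open>s \<in> T\<close> \<open>t \<in> T\<close>] assms[OF \<open>t \<in> T\<close> \<open>t \<in> T\<close>]
    by (simp split: if_splits)
qed

end

lemma obtain_four_distinct:
  assumes "4 \<le> card A"
  obtains a b c d where "distinct [a, b, c, d]" "{a, b, c, d} \<subseteq> A"
proof -
  obtain A' where "A' \<subseteq> A" "card A' = 4" "finite A'"
    using obtain_subset_with_card_n[OF assms] .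
  then obtain xs where xs: "set xs = A'" "distinct xs"
    using finite_distinct_list by blast
  then have "length xs = 4"
    using distinct_card[OF xs(2)] \<open>card A' = 4\<close> by simp
  then have "\<exists>a b c d. xs = [a, b, c, d]"
    by (auto simp: length_Suc_conv numeral_eq_Suc)
  then obtain a b c d where "xs = [a, b, c, d]"
    by blast
  with xs \<open>A' \<subseteq> A\<close> show ?thesis
    by (intro that) auto
qed

lemma of_nat_greater_one_nondegenerate:
  assumes "s \<in> of_nat ` {1<..}" "t \<in> of_nat ` {1<..}"
  shows "(s :: 'a::semiring_char_0) \<noteq> 0 \<and> s \<noteq> 1 \<and> s + 1 \<noteq> 0 \<and> s + t \<noteq> 0"
proof -
  obtain i j where "1 < i" and st: "s = of_nat i" "t = of_nat j"
    using assms by auto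
  then have "of_nat i \<noteq> (0::'a)" "of_nat i \<noteq> (1::'a)"
    "of_nat (i + 1) \<noteq> (0::'a)" "of_nat (i + j) \<noteq> (0::'a)"
    by (simp_all only: of_nat_eq_0_iff of_nat_eq_1_iff)
  then show ?thesis
    unfolding st of_nat_add of_nat_1 by blast
qed

theorem theorem2p7:
  fixes sc :: "'k::field_char_0 \<Rightarrow> 'v::ab_group_add \<Rightarrow> 'v"
    and B :: "'v set" and n :: nat
  assumes "finite_dimensional_vector_space sc B"
    and "card B = n"
    and "n \<ge> 4"
  shows "infinite ((\<lambda>t. restrict (phi sc t) (C2 sc)) ` (UNIV :: 'k set))"
proof -
  obtain e1 e2 e3 e4 where "distinct [e1, e2, e3, e4]" "{e1, e2, e3, e4} \<subseteq> B"
    using obtain_four_distinct[of B] assms(2,3) by blast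
  with assms(1) interpret four_basis_vectors sc B e1 e2 e3 e4
    unfolding four_basis_vectors_def four_basis_vectors_axioms_def by auto
  let ?T = "of_nat ` {1<..} :: 'k set"
  have "inj_on (\<lambda>t. restrict (phi sc t) (C2 sc)) ?T"
    by (rule inj_on_phi) (rule of_nat_greater_one_nondegenerate)
  moreover have "infinite ?T"
    using infinite_Ioi[of "1::nat"] by (auto dest: finite_imageD simp: inj_on_def)
  ultimately show ?thesis
    by (metis finite_image_iff infinite_super subset_UNIV image_mono)
qed

end
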